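(* Let $j,k_G,k_H$ be positive integers with $j\le k_G\le k_H$, let $G$ be a $(j,k_G)$-biclique and $H$ a $(j,k_H)$-biclique, with $P_G(x)=(x)_{k_G}g(x)$ and $P_H(x)=(x)_{k_H}h(x)$. Let $c$ be an integer. Then $g(x)=(-1)^j h(-x+c)$ if and only if, for all $0\le i\le j$, $$m_{\bar G}^i=\sum_{l=0}^{i}(-1)^l\, m_{\bar H}^l\binom{j-l}{j-i}\,(k_G+k_H+j-c-l-1)_{i-l}.$$
   Context: All graphs are finite and simple. For integers $1\le j\le k$, a $(j,k)$-biclique is a graph whose vertex set is the disjoint union of a $j$-clique and a $k$-clique, with an arbitrary set of additional edges each joining a vertex of the $j$-clique to a vertex of the $k$-clique; $\bar G$ denotes the complement of $G$. $P_G(x)$ is the chromatic polynomial, and $(x)_n=x(x-1)\cdots(x-n+1)$ the falling factorial ($(x)_0=1$). For a $(j,k)$-biclique $G$, $(x)_k$ divides $P_G(x)$ and $g(x)=P_G(x)/(x)_k$ is a polynomial of degree $j$ (the interesting factor). $m_F^i$ denotes the number of matchings with $i$ edges in a graph $F$. *)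

theory Defs
  imports "HOL-Computational_Algebra.Polynomial" "HOL-Library.FuncSet"
begin

definition simple_graph :: "'a set \<Rightarrow> 'a set set \<Rightarrow> bool" where
  "simple_graph V E \<longleftrightarrow> finite V \<and> (\<forall>e\<in>E. e \<subseteq> V \<and> card e = 2)"

definition compl_edges :: "'a set \<Rightarrow> 'a set set \<Rightarrow> 'a set set" where
  "compl_edges V E = {e. e \<subseteq> V \<and> card e = 2} - E"

definition is_biclique :: "nat \<Rightarrow> nat \<Rightarrow> 'a set \<Rightarrow> 'a set set \<Rightarrow> bool" where
  "is_biclique j k V E \<longleftrightarrow> simple_graph V E \<and> 1 \<le> j \<and> j \<le> k \<and>
     (\<exists>A B. A \<inter> B = {} \<and> V = A \<union> B \<and> card A = j \<and> card B = k \<and>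
        (\<forall>u\<in>A. \<forall>v\<in>A. u \<noteq> v \<longrightarrow> {u,v} \<in> E) \<and>
        (\<forall>u\<in>B. \<forall>v\<in>B. u \<noteq> v \<longrightarrow> {u,v} \<in> E))"

definition proper_colourings :: "'a set \<Rightarrow> 'a set set \<Rightarrow> nat \<Rightarrow> ('a \<Rightarrow> nat) set" where
  "proper_colourings V E n =
     {f \<in> V \<rightarrow>\<^sub>E {0..<n}. \<forall>u\<in>V. \<forall>v\<in>V. {u,v} \<in> E \<longrightarrow> f u \<noteq> f v}"

definition chromatic_poly :: "'a set \<Rightarrow> 'a set set \<Rightarrow> real poly" where
  "chromatic_poly V E =
     (THE p. \<forall>n::nat. poly p (real n) = real (card (proper_colourings V E n)))"

definition falling_poly :: "nat \<Rightarrow> real poly" where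
  "falling_poly n = (\<Prod>i<n. [:- real i, 1:])"

definition falling_int :: "int \<Rightarrow> nat \<Rightarrow> int" where
  "falling_int x n = (\<Prod>i<n. (x - int i))"

definition num_matchings :: "'a set set \<Rightarrow> nat \<Rightarrow> nat" where
  "num_matchings E i = card {M. M \<subseteq> E \<and> card M = i \<and> pairwise disjnt M}"

end

theory Submission
  imports Defs "HOL-Computational_Algebra.Formal_Power_Series"
begin

(* Let G be a (j,k)-biclique with cliques A (|A| = j) and B (|B| = k), and let m_i count the
   i-edge matchings of the complement of G.  Every complement edge joins A and B.  A proper
   colouring f induces the matching of complement edges {a,b} with f a = f b, and the colourings
   inducing a fixed matching M are exactly the injective colourings of the vertices left over
   after contracting every edge of M.  Hence the number of proper n-colourings is
   sum_i m_i (n)_{j+k-i}, i.e. P_G(x) = (x)_k * g(x) with g(x) = sum_i m_i (x-k)_{j-i}.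

   Reflecting h and expanding
   with Vandermonde writes (-1)^j h(c-x) in the same basis (x-k_G)_{j-i}, so the main theorem
   reduces to comparing coefficients. *)

definition ffact :: "'a::comm_ring_1 \<Rightarrow> nat \<Rightarrow> 'a" where
  "ffact x n = (\<Prod>i<n. x - of_nat i)"

lemma falling_int_eq_ffact: "falling_int x n = ffact x n"
  by (simp add: falling_int_def ffact_def)

lemma of_int_ffact: "of_int (ffact x n) = ffact (of_int x :: 'a::comm_ring_1) n"
  by (simp add: ffact_def of_int_prod)

lemma poly_falling_poly: "poly (falling_poly n) x = ffact x n"
  by (simp add: falling_poly_def poly_prod ffact_def)

lemma ffact_add: "ffact x (k + t) = ffact x k * ffact (x - of_nat k) t"
  by (induct t) (simp_all add: ffact_def algebra_simps)

text \<open>Reflection: \<open>(-1)\<^sup>n (w)\<^sub>n = (n - 1 - w)\<^sub>n\<close>; this is what turns \<open>h(c - x)\<close> back into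
  falling factorials in \<open>x\<close>.\<close>
lemma ffact_reflect: "(-1) ^ n * ffact w n = ffact (of_nat n - 1 - w) n"
proof -
  have "ffact (of_nat n - 1 - w) n = (\<Prod>i<n. (of_nat n - 1 - w) - of_nat (n - Suc i))"
    unfolding ffact_def by (rule prod.nat_diff_reindex[symmetric])
  also have "\<dots> = (\<Prod>i<n. (-1) * (w - of_nat i))"
    by (rule prod.cong) (auto simp: of_nat_diff)
  also have "\<dots> = (-1) ^ n * ffact w n"
    unfolding prod.distrib ffact_def by simp
  finally show ?thesis by simp
qed

lemma ffact_gbinomial: "ffact (z :: 'a::field_char_0) n = fact n * (z gchoose n)"
  by (simp add: gbinomial_prod_rev ffact_def atLeast0LessThan)

lemma ffact_vandermonde:
  fixes y a :: "'a::field_char_0"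
  shows "ffact (y + a) n = (\<Sum>t\<le>n. of_nat (n choose t) * ffact y (n - t) * ffact a t)"
proof -
  have "ffact (y + a) n = fact n * (\<Sum>t\<le>n. (a gchoose t) * (y gchoose (n - t)))"
    by (simp add: ffact_gbinomial add.commute gbinomial_Vandermonde atMost_atLeast0)
  also have "\<dots> = (\<Sum>t\<le>n. of_nat (n choose t) * ffact y (n - t) * ffact a t)"
    unfolding sum_distrib_left
    by (intro sum.cong refl) (simp add: ffact_gbinomial binomial_fact field_simps)
  finally show ?thesis .
qed

text \<open>\<open>(s)\<^sub>t\<close> vanishes for naturals \<open>s < t\<close> but \<open>(s)\<^sub>s = s!\<close> does not; this triangularity gives
  linear independence of the falling factorials.\<close>
lemma ffact_of_nat_eq_0: "s < t \<Longrightarrow> ffact (of_nat s :: 'a::comm_ring_1) t = 0"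
  unfolding ffact_def by (rule prod_zero) auto

lemma ffact_of_nat_self: "ffact (of_nat s :: 'a::{idom,ring_char_0}) s \<noteq> 0"
  unfolding ffact_def by (simp add: prod_zero_iff)

lemma falling_poly_nonzero: "falling_poly n \<noteq> 0"
proof
  assume "falling_poly n = 0"
  then have "poly (falling_poly n) (real n) = 0" by simp
  then show False using ffact_of_nat_self[of n, where 'a=real] by (simp add: poly_falling_poly)
qed

text \<open>The number \<open>n (n - 1) \<cdots> (n - m + 1)\<close> of injections from an \<open>m\<close>-set into \<open>n\<close> colours
  (truncated subtraction on \<open>nat\<close> makes it \<open>0\<close> when \<open>m > n\<close>) is \<open>(n)\<^sub>m\<close>.\<close>
lemma of_nat_prod_diff: "of_nat (\<Prod>i<m. n - i) = ffact (of_nat n :: 'a::comm_ring_1) m"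
proof (cases "m \<le> n")
  case True
  then show ?thesis unfolding ffact_def of_nat_prod
    by (intro prod.cong) (auto simp: of_nat_diff)
next
  case False
  then have "(\<Prod>i<m. n - i) = 0" by (intro prod_zero) (auto intro!: bexI[of _ n])
  then show ?thesis using False ffact_of_nat_eq_0[of n m] by (metis not_le of_nat_0)
qed

text \<open>The falling factorials \<open>(y)\<^sub>0, \<dots>, (y)\<^sub>j\<close> are linearly independent as functions:
  evaluating at \<open>y = s\<close> kills all terms of index \<open>> s\<close>, so induction on \<open>s\<close> applies.\<close>
lemma ffact_coeffs_unique:
  fixes e :: "nat \<Rightarrow> 'a::{idom,ring_char_0}"
  assumes "\<And>y. (\<Sum>t\<le>j. e t * ffact y t) = 0"
  shows "t \<le> j \<Longrightarrow> e t = 0"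
proof (induct t rule: less_induct)
  case (less s)
  have "(\<Sum>t\<le>j. e t * ffact (of_nat s) t) = (\<Sum>t\<le>j. if t = s then e s * ffact (of_nat s) s else 0)"
  proof (rule sum.cong)
    fix t assume "t \<in> {..j}"
    then show "e t * ffact (of_nat s) t = (if t = s then e s * ffact (of_nat s) s else 0)"
      using less ffact_of_nat_eq_0[of s t] by (cases "t < s") auto
  qed simp
  then have "e s * ffact (of_nat s) s = 0" using assms[of "of_nat s"] less.prems by simp
  with ffact_of_nat_self[of s, where 'a='a] show ?case by simp
qed

text \<open>Coefficient comparison in the shifted basis \<open>(x - s)\<^sub>j\<^sub>-\<^sub>i\<close>, the form in which
  both sides of the main equivalence will be written.\<close>
lemma ffact_expansion_eq_iff:
  fixes a b :: "nat \<Rightarrow> 'a::{idom,ring_char_0}" and s :: 'a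
  shows "(\<forall>x. (\<Sum>i\<le>j. a i * ffact (x - s) (j - i)) = (\<Sum>i\<le>j. b i * ffact (x - s) (j - i)))
    \<longleftrightarrow> (\<forall>i\<le>j. a i = b i)"
proof
  assume eq: "\<forall>x. (\<Sum>i\<le>j. a i * ffact (x - s) (j - i)) = (\<Sum>i\<le>j. b i * ffact (x - s) (j - i))"
  have "(\<Sum>t\<le>j. (a (j - t) - b (j - t)) * ffact y t) = 0" for y
  proof -
    have "(\<Sum>t\<le>j. (a (j - t) - b (j - t)) * ffact y t) = (\<Sum>i\<le>j. (a i - b i) * ffact y (j - i))"
      by (rule sum.reindex_bij_witness[where i="\<lambda>i. j - i" and j="\<lambda>t. j - t"]) auto
    also have "\<dots> = 0"
      using eq[rule_format, of "y + s"] by (simp add: left_diff_distrib sum_subtractf)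
    finally show ?thesis .
  qed
  then have "a (j - t) - b (j - t) = 0" if "t \<le> j" for t
    using ffact_coeffs_unique[where e="\<lambda>t. a (j - t) - b (j - t)"] that by blast
  then show "\<forall>i\<le>j. a i = b i"
    by (metis diff_diff_cancel diff_le_self eq_iff_diff_eq_0)
qed simp

lemma poly_eq_if_agree_on_nats:
  fixes p q :: "'a::{idom,ring_char_0} poly"
  assumes "\<And>n. poly p (of_nat n) = poly q (of_nat n)"
  shows "p = q"
proof (rule ccontr)
  assume "p \<noteq> q"
  then have "finite {x. poly (p - q) x = 0}" by (intro poly_roots_finite) simp
  moreover have "range of_nat \<subseteq> {x. poly (p - q) x = 0}" using assms by auto
  ultimately have "finite (range (of_nat :: nat \<Rightarrow> 'a))" by (rule finite_subset[rotated])
  then show False using range_inj_infinite[of "of_nat :: nat \<Rightarrow> 'a"] inj_of_nat by blast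
qed

definition partner :: "'a set set \<Rightarrow> 'a \<Rightarrow> 'a" where
  "partner M x = (THE y. {x, y} \<in> M)"

lemma disjoint_family_shared_point:
  assumes "pairwise disjnt M" "e \<in> M" "e' \<in> M" "z \<in> e" "z \<in> e'"
  shows "e = e'"
  using assms by (metis disjnt_iff pairwiseD)

lemma partner_eq:
  assumes "pairwise disjnt M" "\<forall>e\<in>M. card e = 2" "{x, y} \<in> M"
  shows "partner M x = y"
  unfolding partner_def
proof (rule the_equality)
  show "{x, y} \<in> M" by fact
next
  fix z assume z: "{x, z} \<in> M"
  then have "{x, z} = {x, y}" using assms(1,3) disjoint_family_shared_point by fastforce
  moreover have "z \<noteq> x" using z assms(2) by fastforce
  ultimately show "z = y" by (auto simp: doubleton_eq_iff)
qed

lemma card_matching_side: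
  assumes "finite M" "pairwise disjnt M" "\<forall>e\<in>M. card (e \<inter> A) = 1"
  shows "card (A \<inter> \<Union>M) = card M"
proof -
  have "A \<inter> \<Union>M = (\<Union>e\<in>M. e \<inter> A)" by blast
  also have "card \<dots> = (\<Sum>e\<in>M. card (e \<inter> A))"
  proof (rule card_UN_disjoint)
    show "\<forall>e\<in>M. finite (e \<inter> A)" using assms(3) by (metis card.infinite zero_neq_one)
    show "\<forall>e\<in>M. \<forall>e'\<in>M. e \<noteq> e' \<longrightarrow> (e \<inter> A) \<inter> (e' \<inter> A) = {}"
      using assms(2) by (auto simp: pairwise_def disjnt_def)
  qed fact
  also have "\<dots> = card M" using assms(3) by simp
  finally show ?thesis .
qed

lemma card_kernel_of_retraction:
  assumes "R \<subseteq> V" and retract_into: "\<And>x. x \<in> V \<Longrightarrow> \<rho> x \<in> R"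
    and retract_id: "\<And>x. x \<in> R \<Longrightarrow> \<rho> x = x"
  shows "card {f \<in> V \<rightarrow>\<^sub>E S. \<forall>x\<in>V. \<forall>y\<in>V. f x = f y \<longleftrightarrow> \<rho> x = \<rho> y}
    = card {g \<in> R \<rightarrow>\<^sub>E S. inj_on g R}"
proof (rule bij_betw_same_card[of "\<lambda>f. restrict f R"], rule bij_betw_byWitness)
  let ?K = "{f \<in> V \<rightarrow>\<^sub>E S. \<forall>x\<in>V. \<forall>y\<in>V. f x = f y \<longleftrightarrow> \<rho> x = \<rho> y}"
  let ?I = "{g \<in> R \<rightarrow>\<^sub>E S. inj_on g R}"
  let ?extend = "\<lambda>g. restrict (g \<circ> \<rho>) V"
  have R_V: "x \<in> R \<Longrightarrow> x \<in> V" for x using assms(1) by blast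
  show "\<forall>f\<in>?K. ?extend (restrict f R) = f"
  proof (intro ballI ext)
    fix f x assume f: "f \<in> ?K"
    show "?extend (restrict f R) x = f x"
    proof (cases "x \<in> V")
      case True
      then have "\<rho> x \<in> R" "\<rho> (\<rho> x) = \<rho> x" using retract_into retract_id by auto
      then have "f (\<rho> x) = f x" using f True R_V by blast
      then show ?thesis using True \<open>\<rho> x \<in> R\<close> by simp
    qed (use f in \<open>auto simp: PiE_def extensional_def\<close>)
  qed
  show "\<forall>g\<in>?I. restrict (?extend g) R = g"
    using assms(1) retract_id by (fastforce simp: PiE_def extensional_def fun_eq_iff)
  show "(\<lambda>f. restrict f R) ` ?K \<subseteq> ?I"
  proof (rule image_subsetI)
    fix f assume f: "f \<in> ?K"
    then have "restrict f R \<in> R \<rightarrow>\<^sub>E S" using R_V by auto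
    moreover have "inj_on (restrict f R) R"
      using f R_V retract_id by (auto simp: inj_on_def)
    ultimately show "restrict f R \<in> ?I" by simp
  qed
  show "?extend ` ?I \<subseteq> ?K"
  proof (rule image_subsetI)
    fix g assume g: "g \<in> ?I"
    then have "?extend g \<in> V \<rightarrow>\<^sub>E S" using retract_into by auto
    moreover have "?extend g x = ?extend g y \<longleftrightarrow> \<rho> x = \<rho> y" if "x \<in> V" "y \<in> V" for x y
      using g that retract_into by (auto simp: inj_on_def)
    ultimately show "?extend g \<in> ?K" by simp
  qed
qed

text \<open>A graph whose vertex set splits into two disjoint cliques \<open>A\<close> and \<open>B\<close>; this is the data
  of a biclique with the cliques made explicit.\<close>
locale biclique_split =
  fixes V :: "'a set" and E :: "'a set set" and A B :: "'a set"
  assumes graph: "simple_graph V E"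
    and disjoint: "A \<inter> B = {}" and vertices: "V = A \<union> B"
    and clique_A: "\<And>u v. u \<in> A \<Longrightarrow> v \<in> A \<Longrightarrow> u \<noteq> v \<Longrightarrow> {u, v} \<in> E"
    and clique_B: "\<And>u v. u \<in> B \<Longrightarrow> v \<in> B \<Longrightarrow> u \<noteq> v \<Longrightarrow> {u, v} \<in> E"
begin

definition matchings :: "'a set set set" where
  "matchings = {M. M \<subseteq> compl_edges V E \<and> pairwise disjnt M}"

definition colour_matching :: "('a \<Rightarrow> nat) \<Rightarrow> 'a set set" where
  "colour_matching f = {{a, b} | a b. a \<in> A \<and> b \<in> B \<and> f a = f b}"

text \<open>The vertices left after contracting each edge of \<open>M\<close> to its endpoint in \<open>B\<close>.\<close>
definition unmatched :: "'a set set \<Rightarrow> 'a set" where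
  "unmatched M = V - (A \<inter> \<Union>M)"

definition retract :: "'a set set \<Rightarrow> 'a \<Rightarrow> 'a" where
  "retract M x = (if x \<in> A \<inter> \<Union>M then partner M x else x)"

lemma finite_V: "finite V"
  using graph by (simp add: simple_graph_def)

lemma finite_matchings: "finite matchings"
proof -
  have "matchings \<subseteq> Pow (Pow V)" by (auto simp: matchings_def compl_edges_def)
  then show ?thesis using finite_V by (meson finite_Pow_iff finite_subset)
qed

text \<open>Since \<open>A\<close> and \<open>B\<close> are cliques, every complement edge joins \<open>A\<close> to \<open>B\<close>.\<close>
lemma compl_edge_cross:
  assumes "e \<in> compl_edges V E"
  shows "\<exists>a b. a \<in> A \<and> b \<in> B \<and> e = {a, b}"
proof -
  from assms have e: "e \<subseteq> V" "card e = 2" "e \<notin> E" by (auto simp: compl_edges_def)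
  then obtain x y where xy: "e = {x, y}" "x \<noteq> y" by (auto simp: card_2_iff)
  then show ?thesis
    using e clique_A[of x y] clique_B[of x y] vertices by (auto simp: insert_commute)
qed

lemma matching_edge:
  assumes "M \<in> matchings" "e \<in> M"
  shows "\<exists>a b. a \<in> A \<and> b \<in> B \<and> e = {a, b}" "card e = 2" "e \<notin> E"
  using assms compl_edge_cross by (auto simp: matchings_def compl_edges_def)

lemma card_matching: "M \<in> matchings \<Longrightarrow> card (A \<inter> \<Union>M) = card M"
proof (rule card_matching_side)
  assume M: "M \<in> matchings"
  show "finite M" using M finite_V by (auto simp: matchings_def compl_edges_def intro: finite_subset)
  show "pairwise disjnt M" using M by (simp add: matchings_def)
  show "\<forall>e\<in>M. card (e \<inter> A) = 1"
  proof
    fix e assume "e \<in> M"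
    then obtain a b where "a \<in> A" "b \<in> B" "e = {a, b}" using matching_edge[OF M] by blast
    then have "e \<inter> A = {a}" using disjoint by auto
    then show "card (e \<inter> A) = 1" by simp
  qed
qed

lemma card_unmatched:
  assumes "M \<in> matchings"
  shows "card (unmatched M) = card V - card M"
proof -
  have "A \<inter> \<Union>M \<subseteq> V" using vertices by auto
  then show ?thesis
    unfolding unmatched_def using card_matching[OF assms] finite_V
    by (simp add: card_Diff_subset finite_subset)
qed

lemma matched_partner:
  assumes M: "M \<in> matchings" and x: "x \<in> A \<inter> \<Union>M"
  shows "partner M x \<in> B" "{x, partner M x} \<in> M"
proof -
  obtain e where e: "e \<in> M" "x \<in> e" using x by auto
  obtain a b where ab: "a \<in> A" "b \<in> B" "e = {a, b}" using matching_edge(1)[OF M e(1)] by blast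
  then have "e = {x, b}" using e x disjoint by auto
  moreover have "partner M x = b"
    using M e ab \<open>e = {x, b}\<close> matching_edge(2)
    by (intro partner_eq) (auto simp: matchings_def)
  ultimately show "partner M x \<in> B" "{x, partner M x} \<in> M" using ab e by auto
qed

lemma retract_in_unmatched:
  assumes M: "M \<in> matchings" and x: "x \<in> V"
  shows "retract M x \<in> unmatched M"
proof (cases "x \<in> A \<inter> \<Union>M")
  case True
  have "partner M x \<in> B" by (rule matched_partner(1)[OF M True])
  then have "partner M x \<in> V" "partner M x \<notin> A" using disjoint vertices by auto
  then show ?thesis using True by (simp add: retract_def unmatched_def)
qed (use x in \<open>auto simp: retract_def unmatched_def\<close>)

lemma retract_unmatched: "x \<in> unmatched M \<Longrightarrow> retract M x = x"
  unfolding retract_def unmatched_def by auto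

lemma retract_edge:
  assumes M: "M \<in> matchings" and xy: "{x, y} \<in> M"
  shows "retract M x = retract M y"
proof -
  obtain a b where ab: "a \<in> A" "b \<in> B" "{x, y} = {a, b}" using matching_edge(1)[OF M xy] by blast
  have "partner M a = b" using M ab xy matching_edge(2)
    by (intro partner_eq) (auto simp: matchings_def)
  moreover have "a \<in> A \<inter> \<Union>M" "b \<notin> A" using ab xy disjoint by auto
  ultimately have "retract M a = retract M b" by (simp add: retract_def)
  then show ?thesis using ab(3) by (auto simp: doubleton_eq_iff)
qed

lemma retract_eq_iff:
  assumes M: "M \<in> matchings" and xy: "x \<in> V" "y \<in> V" "x \<noteq> y"
  shows "retract M x = retract M y \<longleftrightarrow> {x, y} \<in> M"
proof
  assume eq: "retract M x = retract M y"
  have partner_edge: "{z, w} \<in> M"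
    if z: "z \<in> A \<inter> \<Union>M" and w: "w \<notin> A \<inter> \<Union>M" and zw: "retract M z = retract M w" for z w
  proof -
    have "retract M z = partner M z" "retract M w = w" using z w by (auto simp: retract_def)
    then show ?thesis using matched_partner(2)[OF M z] zw by simp
  qed
  consider (both) "x \<in> A \<inter> \<Union>M" "y \<in> A \<inter> \<Union>M" | (x_only) "x \<in> A \<inter> \<Union>M" "y \<notin> A \<inter> \<Union>M"
    | (y_only) "x \<notin> A \<inter> \<Union>M" "y \<in> A \<inter> \<Union>M" | (neither) "x \<notin> A \<inter> \<Union>M" "y \<notin> A \<inter> \<Union>M"
    by blast
  then show "{x, y} \<in> M"
  proof cases
    case both
    let ?b = "partner M x"
    have "partner M y = ?b" using eq both by (simp add: retract_def)
    then have "{y, ?b} \<in> M" using matched_partner(2)[OF M both(2)] by simp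
    moreover have "{x, ?b} \<in> M" "?b \<in> B" using matched_partner[OF M both(1)] by auto
    ultimately have "{x, ?b} = {y, ?b}"
      using M disjoint_family_shared_point[of M "{x, ?b}" "{y, ?b}" ?b] by (simp add: matchings_def)
    then show ?thesis using xy both \<open>?b \<in> B\<close> disjoint by (auto simp: doubleton_eq_iff)
  next
    case x_only
    then show ?thesis using partner_edge eq by blast
  next
    case y_only
    then show ?thesis using partner_edge eq by (metis insert_commute)
  next
    case neither
    then have "retract M x = x" "retract M y = y" by (auto simp: retract_def)
    then show ?thesis using eq xy(3) by simp
  qed
qed (rule retract_edge[OF M])


lemma proper_adjacent:
  "f \<in> proper_colourings V E n \<Longrightarrow> u \<in> V \<Longrightarrow> v \<in> V \<Longrightarrow> {u, v} \<in> E \<Longrightarrow> f u \<noteq> f v"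
  by (auto simp: proper_colourings_def)

lemma proper_inj_on_cliques:
  assumes f: "f \<in> proper_colourings V E n"
  shows "inj_on f A" "inj_on f B"
  using proper_adjacent[OF f] clique_A clique_B vertices by (auto intro!: inj_onI) blast+

lemma proper_same_colour_iff:
  assumes f: "f \<in> proper_colourings V E n" and xy: "x \<in> V" "y \<in> V" "x \<noteq> y"
  shows "f x = f y \<longleftrightarrow> {x, y} \<in> colour_matching f"
proof
  assume eq: "f x = f y"
  then consider "x \<in> A" "y \<in> B" | "y \<in> A" "x \<in> B"
    using proper_inj_on_cliques[OF f] xy vertices by (auto dest: inj_onD)
  then show "{x, y} \<in> colour_matching f"
  proof cases
    case 1
    then show ?thesis using eq by (auto simp: colour_matching_def)
  next
    case 2
    then have "{y, x} \<in> colour_matching f" using eq[symmetric] unfolding colour_matching_def by blast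
    then show ?thesis by (simp add: insert_commute)
  qed
next
  assume "{x, y} \<in> colour_matching f"
  then obtain a b where "f a = f b" "{x, y} = {a, b}" by (auto simp: colour_matching_def)
  then show "f x = f y" by (auto simp: doubleton_eq_iff)
qed

lemma colour_matching_in_matchings:
  assumes f: "f \<in> proper_colourings V E n"
  shows "colour_matching f \<in> matchings"
  unfolding matchings_def
proof (intro CollectI conjI subsetI pairwiseI)
  fix e assume "e \<in> colour_matching f"
  then obtain a b where ab: "a \<in> A" "b \<in> B" "f a = f b" "e = {a, b}"
    by (auto simp: colour_matching_def)
  then have "a \<noteq> b" "a \<in> V" "b \<in> V" using disjoint vertices by auto
  moreover have "{a, b} \<notin> E" using f ab(3) \<open>a \<in> V\<close> \<open>b \<in> V\<close> by (auto simp: proper_colourings_def)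
  ultimately show "e \<in> compl_edges V E" using ab(4) by (auto simp: compl_edges_def)
next
  fix e e' assume e: "e \<in> colour_matching f" "e' \<in> colour_matching f" "e \<noteq> e'"
  obtain a b where ab: "a \<in> A" "b \<in> B" "f a = f b" "e = {a, b}"
    using e(1) by (auto simp: colour_matching_def)
  obtain a' b' where ab': "a' \<in> A" "b' \<in> B" "f a' = f b'" "e' = {a', b'}"
    using e(2) by (auto simp: colour_matching_def)
  show "disjnt e e'"
  proof (rule ccontr)
    assume "\<not> disjnt e e'"
    then have "f a = f a'" "f b = f b'" using ab ab' by (auto simp: disjnt_def)
    then have "a = a'" "b = b'"
      using inj_onD[OF proper_inj_on_cliques(1)[OF f]] inj_onD[OF proper_inj_on_cliques(2)[OF f]] ab ab'
      by blast+
    then show False using e(3) ab ab' by simp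
  qed
qed

lemma kernel_map_in_fibre:
  assumes M: "M \<in> matchings" and f: "f \<in> V \<rightarrow>\<^sub>E {0..<n}"
    and kernel: "\<forall>x\<in>V. \<forall>y\<in>V. f x = f y \<longleftrightarrow> retract M x = retract M y"
  shows "f \<in> proper_colourings V E n" "colour_matching f = M"
proof -
  have same: "f x = f y \<longleftrightarrow> {x, y} \<in> M" if "x \<in> V" "y \<in> V" "x \<noteq> y" for x y
    using kernel retract_eq_iff[OF M that] that by blast
  have "f u \<noteq> f v" if uv: "u \<in> V" "v \<in> V" "{u, v} \<in> E" for u v
  proof -
    have "card {u, v} = 2" using graph uv(3) by (auto simp: simple_graph_def)
    then have "u \<noteq> v" by auto
    then show ?thesis using same[OF uv(1,2)] matching_edge(3)[OF M] uv(3) by blast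
  qed
  then show "f \<in> proper_colourings V E n" using f by (auto simp: proper_colourings_def)
  show "colour_matching f = M"
  proof
    show "colour_matching f \<subseteq> M"
    proof
      fix e assume "e \<in> colour_matching f"
      then obtain a b where ab: "a \<in> A" "b \<in> B" "f a = f b" "e = {a, b}"
        by (auto simp: colour_matching_def)
      then show "e \<in> M" using same[of a b] disjoint vertices by auto
    qed
    show "M \<subseteq> colour_matching f"
    proof
      fix e assume "e \<in> M"
      then obtain a b where ab: "a \<in> A" "b \<in> B" "e = {a, b}" using matching_edge(1)[OF M] by blast
      then have "f a = f b" using same[of a b] \<open>e \<in> M\<close> disjoint vertices by auto
      then show "e \<in> colour_matching f" using ab by (auto simp: colour_matching_def)
    qed
  qed
qed

lemma colouring_fibre:
  assumes M: "M \<in> matchings"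
  shows "{f \<in> proper_colourings V E n. colour_matching f = M}
    = {f \<in> V \<rightarrow>\<^sub>E {0..<n}. \<forall>x\<in>V. \<forall>y\<in>V. f x = f y \<longleftrightarrow> retract M x = retract M y}"
    (is "?fibre = ?kernel")
proof
  show "?fibre \<subseteq> ?kernel"
  proof
    fix f assume "f \<in> ?fibre"
    then have f: "f \<in> proper_colourings V E n" and M_def: "M = colour_matching f" by auto
    have "f x = f y \<longleftrightarrow> retract M x = retract M y" if "x \<in> V" "y \<in> V" for x y
      using proper_same_colour_iff[OF f that] retract_eq_iff[OF M that] M_def by (cases "x = y") auto
    then show "f \<in> ?kernel" using f M_def by (auto simp: proper_colourings_def)
  qed
  show "?kernel \<subseteq> ?fibre"
  proof
    fix f assume "f \<in> ?kernel"
    then show "f \<in> ?fibre" using kernel_map_in_fibre[OF M, of f n] by simp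
  qed
qed

lemma card_colouring_fibre:
  assumes M: "M \<in> matchings"
  shows "card {f \<in> proper_colourings V E n. colour_matching f = M} = (\<Prod>i<card V - card M. n - i)"
proof -
  have unmatched_V: "unmatched M \<subseteq> V" by (auto simp: unmatched_def)
  have "card {f \<in> proper_colourings V E n. colour_matching f = M}
      = card {g \<in> unmatched M \<rightarrow>\<^sub>E {0..<n}. inj_on g (unmatched M)}"
    unfolding colouring_fibre[OF M]
    by (rule card_kernel_of_retraction[OF unmatched_V retract_in_unmatched[OF M] retract_unmatched])
  also have "\<dots> = (\<Prod>i<card (unmatched M). n - i)"
    using card_inj_on_subset_funcset[of "unmatched M" "{0..<n}" "unmatched M"] finite_V unmatched_V
    by (simp add: finite_subset atLeast0LessThan)
  finally show ?thesis using card_unmatched[OF M] by simp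
qed

text \<open>Counting proper colourings by the matching they induce: \<open>\<Sum>\<^sub>i m\<^sub>i (n)\<^sub>|\<^sub>V\<^sub>|\<^sub>-\<^sub>i\<close>.\<close>
lemma card_proper_colourings:
  "card (proper_colourings V E n)
    = (\<Sum>i\<le>card A. num_matchings (compl_edges V E) i * (\<Prod>t<card V - i. n - t))"
proof -
  let ?fibre = "\<lambda>M. {f \<in> proper_colourings V E n. colour_matching f = M}"
  have "finite (proper_colourings V E n)"
    by (rule finite_subset[of _ "V \<rightarrow>\<^sub>E {0..<n}"])
      (auto simp: proper_colourings_def finite_V intro: finite_PiE)
  then have "card (\<Union>M\<in>matchings. ?fibre M) = (\<Sum>M\<in>matchings. card (?fibre M))"
    using finite_matchings by (intro card_UN_disjoint) auto
  moreover have "proper_colourings V E n = (\<Union>M\<in>matchings. ?fibre M)"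
    using colour_matching_in_matchings by blast
  ultimately have "card (proper_colourings V E n) = (\<Sum>M\<in>matchings. card (?fibre M))"
    by simp
  also have "\<dots> = (\<Sum>M\<in>matchings. \<Prod>t<card V - card M. n - t)"
    by (intro sum.cong refl card_colouring_fibre)
  also have "\<dots> = (\<Sum>i\<le>card A. \<Sum>M\<in>{M \<in> matchings. card M = i}. \<Prod>t<card V - card M. n - t)"
  proof (rule sum.group[symmetric, OF finite_matchings finite_atMost], rule image_subsetI)
    fix M assume "M \<in> matchings"
    moreover have "finite A" using finite_V vertices by simp
    ultimately show "card M \<in> {..card A}"
      using card_matching card_mono[of A "A \<inter> \<Union>M"] by fastforce
  qed
  also have "\<dots> = (\<Sum>i\<le>card A. num_matchings (compl_edges V E) i * (\<Prod>t<card V - i. n - t))"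
  proof (intro sum.cong refl)
    fix i
    have "{M \<in> matchings. card M = i} = {M. M \<subseteq> compl_edges V E \<and> card M = i \<and> pairwise disjnt M}"
      by (auto simp: matchings_def)
    then show "(\<Sum>M\<in>{M \<in> matchings. card M = i}. \<Prod>t<card V - card M. n - t)
        = num_matchings (compl_edges V E) i * (\<Prod>t<card V - i. n - t)"
      by (simp add: num_matchings_def)
  qed
  finally show ?thesis .
qed

end

lemma chromatic_poly_eqI:
  fixes p :: "real poly"
  assumes "\<And>n. poly p (real n) = real (card (proper_colourings V E n))"
  shows "chromatic_poly V E = p"
  unfolding chromatic_poly_def
proof (rule the_equality)
  show "\<forall>n. poly p (real n) = real (card (proper_colourings V E n))" using assms by simp
  fix q assume "\<forall>n. poly q (real n) = real (card (proper_colourings V E n))"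
  then show "q = p" using assms by (intro poly_eq_if_agree_on_nats) simp
qed

definition matching_factor :: "nat \<Rightarrow> nat \<Rightarrow> 'a set set \<Rightarrow> real poly" where
  "matching_factor j k F =
     (\<Sum>i\<le>j. smult (real (num_matchings F i)) (pcompose (falling_poly (j - i)) [:- real k, 1:]))"

lemma poly_matching_factor:
  "poly (matching_factor j k F) x = (\<Sum>i\<le>j. real (num_matchings F i) * ffact (x - real k) (j - i))"
  by (simp add: matching_factor_def poly_sum poly_falling_poly poly_pcompose)

lemma chromatic_poly_biclique:
  assumes "is_biclique j k V E"
  shows "chromatic_poly V E = falling_poly k * matching_factor j k (compl_edges V E)"
proof -
  from assms obtain A B where graph: "simple_graph V E" and split: "A \<inter> B = {}" "V = A \<union> B"
    and card: "card A = j" "card B = k"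
    and cliques: "\<forall>u\<in>A. \<forall>v\<in>A. u \<noteq> v \<longrightarrow> {u, v} \<in> E" "\<forall>u\<in>B. \<forall>v\<in>B. u \<noteq> v \<longrightarrow> {u, v} \<in> E"
    unfolding is_biclique_def by blast
  interpret biclique_split V E A B using graph split cliques by unfold_locales auto
  have card_V: "card V = j + k"
    using split card finite_V by (simp add: card_Un_disjoint)
  let ?m = "\<lambda>i. real (num_matchings (compl_edges V E) i)"
  show ?thesis
  proof (rule chromatic_poly_eqI)
    fix n
    have "real (card (proper_colourings V E n)) = (\<Sum>i\<le>j. ?m i * ffact (real n) (k + (j - i)))"
      unfolding card_proper_colourings card(1) of_nat_sum of_nat_mult of_nat_prod_diff
      by (intro sum.cong refl) (simp add: card_V add.commute[of j k])
    also have "\<dots> = poly (falling_poly k * matching_factor j k (compl_edges V E)) (real n)"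
      unfolding ffact_add poly_mult poly_matching_factor poly_falling_poly sum_distrib_left
      by (simp add: mult_ac)
    finally show "poly (falling_poly k * matching_factor j k (compl_edges V E)) (real n)
        = real (card (proper_colourings V E n))" by simp
  qed
qed

lemma poly_biclique_factor:
  assumes "is_biclique j k V E" "chromatic_poly V E = falling_poly k * g"
  shows "poly g x = (\<Sum>i\<le>j. real (num_matchings (compl_edges V E) i) * ffact (x - real k) (j - i))"
proof -
  have "g = matching_factor j k (compl_edges V E)"
    using chromatic_poly_biclique[OF assms(1)] assms(2) falling_poly_nonzero[of k] by simp
  then show ?thesis by (simp add: poly_matching_factor)
qed

lemma reflected_ffact_split:
  fixes c x :: "'a::field_char_0"
  assumes "l \<le> j"
  shows "(-1) ^ (j - l) * ffact (c - x - of_nat kH) (j - l)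
    = (\<Sum>t\<le>j - l. of_nat ((j - l) choose t) * ffact (x - of_nat kG) (j - l - t)
         * ffact (of_nat kG + of_nat kH + of_nat j - c - of_nat l - 1) t)"
proof -
  have "(-1) ^ (j - l) * ffact (c - x - of_nat kH) (j - l)
      = ffact ((x - of_nat kG) + (of_nat kG + of_nat kH + of_nat j - c - of_nat l - 1)) (j - l)"
    unfolding ffact_reflect using assms by (simp add: of_nat_diff algebra_simps)
  then show ?thesis by (simp only: ffact_vandermonde)
qed

lemma reflected_ffact_expansion:
  fixes m :: "nat \<Rightarrow> 'a::field_char_0" and c x :: 'a and j kG kH :: nat
  defines "a \<equiv> \<lambda>l. of_nat kG + of_nat kH + of_nat j - c - of_nat l - 1"
  shows "(-1) ^ j * (\<Sum>l\<le>j. m l * ffact (c - x - of_nat kH) (j - l))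
    = (\<Sum>i\<le>j. (\<Sum>l=0..i. (-1) ^ l * m l * of_nat ((j - l) choose (j - i)) * ffact (a l) (i - l))
        * ffact (x - of_nat kG) (j - i))"
proof -
  define F where "F l t = (-1) ^ l * m l * of_nat ((j - l) choose t) * ffact (a l) t
    * ffact (x - of_nat kG) (j - l - t)" for l t
  have "(-1) ^ j * (\<Sum>l\<le>j. m l * ffact (c - x - of_nat kH) (j - l)) = (\<Sum>l\<le>j. \<Sum>t\<le>j - l. F l t)"
    unfolding sum_distrib_left
  proof (intro sum.cong refl)
    fix l assume "l \<in> {..j}"
    then have lj: "l \<le> j" by simp
    then have "(-1 :: 'a) ^ j = (-1) ^ l * (-1) ^ (j - l)" by (simp flip: power_add)
    then show "(-1) ^ j * (m l * ffact (c - x - of_nat kH) (j - l)) = (\<Sum>t\<le>j - l. F l t)"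
      using reflected_ffact_split[OF lj, of c x kH kG]
      by (simp add: F_def a_def sum_distrib_left mult_ac)
  qed
  also have "\<dots> = (\<Sum>(l, t)\<in>{(l, t). l + t \<le> j}. F l t)"
    by (simp add: pairs_le_eq_Sigma sum.Sigma)
  also have "\<dots> = (\<Sum>i\<le>j. \<Sum>l\<le>i. F l (i - l))"
    by (rule sum.triangle_reindex_eq)
  also have "\<dots> = (\<Sum>i\<le>j. (\<Sum>l=0..i. (-1) ^ l * m l * of_nat ((j - l) choose (j - i)) * ffact (a l) (i - l))
        * ffact (x - of_nat kG) (j - i))"
    unfolding sum_distrib_right atMost_atLeast0
  proof (intro sum.cong refl)
    fix i l assume "i \<in> {0..j}" "l \<in> {0..i}"
    then have "l \<le> i" "i \<le> j" by auto
    then show "F l (i - l) = (-1) ^ l * m l * of_nat ((j - l) choose (j - i)) * ffact (a l) (i - l)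
        * ffact (x - of_nat kG) (j - i)"
      using binomial_symmetric[of "i - l" "j - l"] by (simp add: F_def)
  qed
  finally show ?thesis .
qed

text \<open>The main theorem: after writing \<open>g(x)\<close> and \<open>(-1)\<^sup>j h(c - x)\<close> in the same falling factorial
  basis, the polynomial identity is equivalent to equality of coefficients.\<close>
theorem mainTheorem3:
  fixes VG :: "'a set" and EG :: "'a set set"
    and VH :: "'b set" and EH :: "'b set set"
    and j kG kH :: nat and c :: int and g h :: "real poly"
  assumes "1 \<le> j" "j \<le> kG" "kG \<le> kH"
    and "is_biclique j kG VG EG" and "is_biclique j kH VH EH"
    and "chromatic_poly VG EG = falling_poly kG * g"
    and "chromatic_poly VH EH = falling_poly kH * h"
  shows "g = smult ((-1) ^ j) (pcompose h [:of_int c, -1:]) \<longleftrightarrow>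
    (\<forall>i\<le>j. int (num_matchings (compl_edges VG EG) i) =
       (\<Sum>l=0..i. (-1) ^ l * int (num_matchings (compl_edges VH EH) l)
          * int ((j - l) choose (j - i))
          * falling_int (int kG + int kH + int j - c - int l - 1) (i - l)))"
    (is "_ \<longleftrightarrow> (\<forall>i\<le>j. int (?mG i) = ?rhs i)")
proof -
  define mH where "mH l = real (num_matchings (compl_edges VH EH) l)" for l
  have g: "poly g x = (\<Sum>i\<le>j. real (?mG i) * ffact (x - real kG) (j - i))" for x
    by (rule poly_biclique_factor[OF assms(4,6)])
  have rhs_real: "real_of_int (?rhs i) = (\<Sum>l=0..i. (-1) ^ l * mH l * of_nat ((j - l) choose (j - i))
      * ffact (of_nat kG + of_nat kH + of_nat j - of_int c - of_nat l - 1) (i - l))" for i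
    by (simp add: mH_def falling_int_eq_ffact of_int_ffact)
  have h_reflected: "(-1) ^ j * poly h (of_int c - x)
      = (\<Sum>i\<le>j. real_of_int (?rhs i) * ffact (x - real kG) (j - i))" for x
  proof -
    have "poly h (of_int c - x) = (\<Sum>l\<le>j. mH l * ffact (of_int c - x - of_nat kH) (j - l))"
      using poly_biclique_factor[OF assms(5,7)] by (simp add: mH_def)
    then show ?thesis unfolding rhs_real by (simp only: reflected_ffact_expansion)
  qed
  have "g = smult ((-1) ^ j) (pcompose h [:of_int c, -1:])
      \<longleftrightarrow> (\<forall>x. poly g x = (-1) ^ j * poly h (of_int c - x))"
    by (simp add: poly_eq_poly_eq_iff[symmetric] fun_eq_iff poly_pcompose)
  also have "\<dots> \<longleftrightarrow> (\<forall>i\<le>j. real (?mG i) = real_of_int (?rhs i))"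
    unfolding g h_reflected by (rule ffact_expansion_eq_iff)
  also have "\<dots> \<longleftrightarrow> (\<forall>i\<le>j. int (?mG i) = ?rhs i)"
  proof -
    have "real n = real_of_int r \<longleftrightarrow> int n = r" for n r
      by (metis of_int_eq_iff of_int_of_nat_eq)
    then show ?thesis by (simp only:)
  qed
  finally show ?thesis .
qed

end
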